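(* Let $(G,\cdot)$ be a semigroup, $(G,\curlywedge)$ a semilattice on $G$ with order $\zeta$ ($x\leqslant y$ iff $x\curlywedge y=x$), and $\xi,\delta\subseteq G\times G$, writing $x\downarrow y$ for $(x,y)\in\xi$. Assume $\xi$ is left regular ($(u,v)\in\xi\Rightarrow(xu,xv)\in\xi$), $\zeta\subseteq\xi$, $\delta$ is a left ideal ($(x,y)\in\delta\Rightarrow(ux,y)\in\delta$), and for all $x,y,z,u,v\in G$: $x(y\curlywedge z)=xy\curlywedge xz$; $x\leqslant y\wedge u\leqslant v\wedge y\downarrow v\Rightarrow u\downarrow x$; $x\downarrow y\Rightarrow(x\curlywedge y)u=xu\curlywedge yu$. Then $\xi$ is reflexive and symmetric, and $\zeta$ is stable on $(G,\cdot)$, i.e. $x\leqslant y$ and $u\leqslant v$ imply $xu\leqslant yv$ for all $x,y,u,v\in G$. *)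

theory Defs
  imports Main
begin

definition sl_order :: "('a \<Rightarrow> 'a \<Rightarrow> 'a) \<Rightarrow> ('a \<times> 'a) set" where
  "sl_order meet = {(x, y). meet x y = x}"

end

theory Submission
  imports Defs
begin

text \<open>Reflexivity of \<open>\<xi>\<close> comes from reflexivity of the semilattice order, and symmetry from
  the order axiom with \<open>x = y\<close> and \<open>u = v\<close>. For stability, \<open>xu \<le> yu\<close> holds because \<open>\<xi>\<close>
  contains the order and meets of \<open>\<xi>\<close>-related elements distribute on the right, while
  \<open>yu \<le> yv\<close> follows from left distributivity; transitivity of the order concludes.\<close>

lemma sl_order_refl:
  assumes "\<And>x. meet x x = x"
  shows "(x, x) \<in> sl_order meet"
  using assms by (simp add: sl_order_def)

lemma sl_order_trans:
  assumes "\<And>x y z. meet (meet x y) z = meet x (meet y z)"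
    and "(x, y) \<in> sl_order meet" and "(y, z) \<in> sl_order meet"
  shows "(x, z) \<in> sl_order meet"
proof -
  have "meet x y = x" and "meet y z = y" using assms(2,3) by (simp_all add: sl_order_def)
  then have "meet x z = x" by (metis assms(1))
  then show ?thesis by (simp add: sl_order_def)
qed

lemma sl_order_mult_left:
  assumes "\<And>x y z. mult x (meet y z) = meet (mult x y) (mult x z)"
    and "(u, v) \<in> sl_order meet"
  shows "(mult y u, mult y v) \<in> sl_order meet"
proof -
  have "meet u v = u" using assms(2) by (simp add: sl_order_def)
  then have "meet (mult y u) (mult y v) = mult y u" by (simp add: assms(1)[symmetric])
  then show ?thesis by (simp add: sl_order_def)
qed

lemma sl_order_mult_right:
  assumes "\<And>x y u. (x, y) \<in> \<xi> \<Longrightarrow> mult (meet x y) u = meet (mult x u) (mult y u)"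
    and "sl_order meet \<subseteq> \<xi>" and "(x, y) \<in> sl_order meet"
  shows "(mult x u, mult y u) \<in> sl_order meet"
proof -
  have "meet x y = x" using assms(3) by (simp add: sl_order_def)
  moreover have "mult (meet x y) u = meet (mult x u) (mult y u)" using assms by blast
  ultimately show ?thesis by (simp add: sl_order_def)
qed

lemma refl_if_sl_order_subset:
  assumes "\<And>x. meet x x = x" and "sl_order meet \<subseteq> \<xi>"
  shows "refl \<xi>"
  using assms by (auto simp: refl_on_def sl_order_def)

lemma sym_if_sl_order_reverses:
  assumes "\<And>x. meet x x = x"
    and "\<And>x y u v. (x, y) \<in> sl_order meet \<Longrightarrow> (u, v) \<in> sl_order meet \<Longrightarrow>
                (y, v) \<in> \<xi> \<Longrightarrow> (u, x) \<in> \<xi>"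
  shows "sym \<xi>"
proof (rule symI)
  fix a b
  assume "(a, b) \<in> \<xi>"
  with assms(2) sl_order_refl[of meet, OF assms(1)] show "(b, a) \<in> \<xi>" by blast
qed

theorem proposition3:
  fixes mult :: "'a \<Rightarrow> 'a \<Rightarrow> 'a" and meet :: "'a \<Rightarrow> 'a \<Rightarrow> 'a"
    and \<xi> \<delta> :: "('a \<times> 'a) set"
  assumes semigroup: "\<And>x y z. mult (mult x y) z = mult x (mult y z)"
    and meet_assoc: "\<And>x y z. meet (meet x y) z = meet x (meet y z)"
    and meet_comm: "\<And>x y. meet x y = meet y x"
    and meet_idem: "\<And>x. meet x x = x"
    and xi_left_regular: "\<And>u v x. (u, v) \<in> \<xi> \<Longrightarrow> (mult x u, mult x v) \<in> \<xi>"
    and zeta_sub_xi: "sl_order meet \<subseteq> \<xi>"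
    and delta_left_ideal: "\<And>x y u. (x, y) \<in> \<delta> \<Longrightarrow> (mult u x, y) \<in> \<delta>"
    and left_distrib: "\<And>x y z. mult x (meet y z) = meet (mult x y) (mult x z)"
    and ax2: "\<And>x y u v. (x, y) \<in> sl_order meet \<Longrightarrow> (u, v) \<in> sl_order meet \<Longrightarrow>
                (y, v) \<in> \<xi> \<Longrightarrow> (u, x) \<in> \<xi>"
    and ax3: "\<And>x y u. (x, y) \<in> \<xi> \<Longrightarrow> mult (meet x y) u = meet (mult x u) (mult y u)"
  shows "refl \<xi> \<and> sym \<xi> \<and>
         (\<forall>x y u v. (x, y) \<in> sl_order meet \<and> (u, v) \<in> sl_order meet
            \<longrightarrow> (mult x u, mult y v) \<in> sl_order meet)"
proof (intro conjI allI impI)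
  show "refl \<xi>" using meet_idem zeta_sub_xi by (rule refl_if_sl_order_subset)
  show "sym \<xi>" using meet_idem ax2 by (rule sym_if_sl_order_reverses)
  fix x y u v
  assume "(x, y) \<in> sl_order meet \<and> (u, v) \<in> sl_order meet"
  then have "(mult x u, mult y u) \<in> sl_order meet" and "(mult y u, mult y v) \<in> sl_order meet"
    using sl_order_mult_right[where \<xi> = \<xi> and mult = mult, OF ax3 zeta_sub_xi]
      sl_order_mult_left[where meet = meet and mult = mult, OF left_distrib]
    by simp_all
  then show "(mult x u, mult y v) \<in> sl_order meet"
    by (rule sl_order_trans[where meet = meet, OF meet_assoc])
qed

end
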